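(* Let $\Psi\in\mathcal P_p$, $m\ge p$, $q\in\{1,2,\ldots\}$, $N=n+p+qm+1$, $\beta=(q/N)^{1/q}$, $\gamma=n/N$, and let $\hat\Sigma$ be the power inverse Wishart MAP estimator with prior parameters $(\Psi,m,q)$. Then, in the Loewner order on symmetric matrices, $$\beta\Psi\le\hat\Sigma\le\beta\Psi+\gamma S.$$ In particular $\beta\Psi_{ii}\le\hat\Sigma_{ii}\le\beta\Psi_{ii}+\gamma S_{ii}$ for every $i$.
   Context: $\mathcal P_p$ is the set of positive definite $p\times p$ real matrices; $A\le B$ means $B-A$ is positive semidefinite. Data $X_1,\ldots,X_n\in\mathbb R^p$, $\bar X=\frac1n\sum_iX_i$, $S=\frac1n\sum_i(X_i-\bar X)(X_i-\bar X)^\top$. The MAP estimator $\hat\Sigma$ is the $\Sigma$-component of the unique maximizer over $\mu\in\mathbb R^p$, $\Sigma\in\mathcal P_p$ of $|\Sigma|^{-n/2}\exp(-\tfrac12\sum_i(X_i-\mu)^\top\Sigma^{-1}(X_i-\mu))\cdot\exp(-\tfrac12\operatorname{tr}((\Psi^{-1/2}\Sigma\Psi^{-1/2})^{-q}))|\Sigma|^{-(qm+p+1)/2}$, with $\Psi^{1/2}$ the positive definite square root and $\Psi^{-1/2}=(\Psi^{1/2})^{-1}$. *)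

theory Defs
  imports "HOL-Analysis.Analysis"
begin

definition sym_mat :: "real^'p^'p \<Rightarrow> bool" where
  "sym_mat A \<longleftrightarrow> transpose A = A"

definition pos_def :: "real^'p^'p \<Rightarrow> bool" where
  "pos_def A \<longleftrightarrow> sym_mat A \<and> (\<forall>x. x \<noteq> 0 \<longrightarrow> x \<bullet> (A *v x) > 0)"

definition pos_semidef :: "real^'p^'p \<Rightarrow> bool" where
  "pos_semidef A \<longleftrightarrow> sym_mat A \<and> (\<forall>x. x \<bullet> (A *v x) \<ge> 0)"

definition loewner_le :: "real^'p^'p \<Rightarrow> real^'p^'p \<Rightarrow> bool" where
  "loewner_le A B \<longleftrightarrow> pos_semidef (B - A)"

fun mat_pow :: "real^'p^'p \<Rightarrow> nat \<Rightarrow> real^'p^'p" where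
  "mat_pow A 0 = mat 1"
| "mat_pow A (Suc k) = A ** mat_pow A k"

definition pd_sqrt :: "real^'p^'p \<Rightarrow> real^'p^'p" where
  "pd_sqrt A = (THE R. pos_def R \<and> R ** R = A)"

definition outer :: "real^'p \<Rightarrow> real^'p \<Rightarrow> real^'p^'p" where
  "outer x y = (\<chi> i j. x $ i * y $ j)"

definition sample_mean :: "nat \<Rightarrow> (nat \<Rightarrow> real^'p) \<Rightarrow> real^'p" where
  "sample_mean n X = (1 / real n) *\<^sub>R (\<Sum>i=1..n. X i)"

definition sample_cov :: "nat \<Rightarrow> (nat \<Rightarrow> real^'p) \<Rightarrow> real^'p^'p" where
  "sample_cov n X = (1 / real n) *\<^sub>R
     (\<Sum>i=1..n. outer (X i - sample_mean n X) (X i - sample_mean n X))"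

text \<open>Likelihood times power inverse Wishart prior (unnormalised posterior).\<close>
definition piw_objective ::
  "real^'p^'p \<Rightarrow> real \<Rightarrow> nat \<Rightarrow> nat \<Rightarrow> (nat \<Rightarrow> real^'p) \<Rightarrow> real^'p \<Rightarrow> real^'p^'p \<Rightarrow> real" where
  "piw_objective Psi m q n X mu Sg =
     det Sg powr (- real n / 2)
     * exp (- (1/2) * (\<Sum>i=1..n. (X i - mu) \<bullet> (matrix_inv Sg *v (X i - mu))))
     * exp (- (1/2) * trace (matrix_inv (mat_pow
          (matrix_inv (pd_sqrt Psi) ** Sg ** matrix_inv (pd_sqrt Psi)) q)))
     * det Sg powr (- (real q * m + real CARD('p) + 1) / 2)"

definition is_maximizer ::
  "real^'p^'p \<Rightarrow> real \<Rightarrow> nat \<Rightarrow> nat \<Rightarrow> (nat \<Rightarrow> real^'p) \<Rightarrow> real^'p \<Rightarrow> real^'p^'p \<Rightarrow> bool" where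
  "is_maximizer Psi m q n X mu Sg \<longleftrightarrow> pos_def Sg \<and>
     (\<forall>mu' Sg'. pos_def Sg' \<longrightarrow>
        piw_objective Psi m q n X mu' Sg' \<le> piw_objective Psi m q n X mu Sg)"

definition is_piw_MAP ::
  "real^'p^'p \<Rightarrow> real \<Rightarrow> nat \<Rightarrow> nat \<Rightarrow> (nat \<Rightarrow> real^'p) \<Rightarrow> real^'p^'p \<Rightarrow> bool" where
  "is_piw_MAP Psi m q n X Sg \<longleftrightarrow>
     (\<exists>mu. is_maximizer Psi m q n X mu Sg \<and>
        (\<forall>mu' Sg'. is_maximizer Psi m q n X mu' Sg' \<longrightarrow> mu' = mu \<and> Sg' = Sg))"

end

theory Submission
  imports Defs
begin

(* The power inverse Wishart MAP estimator is analysed through its whitened precision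
   W = R Sigma^-1 R, where R is the positive definite square root of Psi.

   (1) For every fixed Sigma the objective is maximal at the sample mean, so Sigma-hat also
       maximises the profile objective at mu = sample mean.
   (2) In the variable M = R Sigma^-1 R the logarithm of that profile objective is, up to an
       additive constant, the function
         phi M = N/2 ln det M - 1/2 (sum_l z_l' M z_l) - 1/2 tr M^q,   z_l = R^-1 (X_l - mean),
       hence W maximises phi over all positive definite matrices.
   (3) Differentiating phi along the congruence curves (I + t E_ij) W (I + t E_ij)' (whose
       determinants are explicit) yields the stationarity equation  N I = Z W + q W^q,
       where Z = sum_l z_l z_l' is the whitened scatter matrix.
   (4) Multiplying by W^-1 gives N W^-1 = Z + q W^(q-1).  The smallest eigenvalue of W^-1 is
       therefore at least beta, and the resulting bound |W y| <= |y| / beta turns the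
       equation into  beta I <= W^-1 <= beta I + Z / N.
   (5) Undoing the congruence by R gives the Loewner bounds for Sigma-hat; the diagonal
       bounds are the quadratic forms at the standard basis vectors. *)

lemma matrix_inv_both:
  "invertible A \<Longrightarrow> A ** matrix_inv A = mat 1 \<and> matrix_inv A ** A = mat 1"
  unfolding invertible_def matrix_inv_def by (rule someI_ex)

lemma matrix_inv_left: "invertible (A::real^'n^'n) \<Longrightarrow> matrix_inv A ** A = mat 1"
  using matrix_inv_both by blast

lemma matrix_inv_right: "invertible (A::real^'n^'n) \<Longrightarrow> A ** matrix_inv A = mat 1"
  using matrix_inv_both by blast

lemma matrix_inv_unique:
  fixes A B :: "real^'n^'n"
  assumes "A ** B = mat 1"
  shows "matrix_inv A = B"
proof -
  have "invertible A" using assms invertible_right_inverse by blast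
  then have "matrix_inv A = matrix_inv A ** (A ** B)" using assms by simp
  also have "\<dots> = B" by (simp add: matrix_mul_assoc matrix_inv_left[OF \<open>invertible A\<close>])
  finally show ?thesis .
qed

lemma matrix_inv_inv: "invertible (A::real^'n^'n) \<Longrightarrow> matrix_inv (matrix_inv A) = A"
  by (simp add: matrix_inv_left matrix_inv_unique)

lemma matrix_inv_mult:
  fixes A B :: "real^'n^'n"
  assumes "invertible A" "invertible B"
  shows "matrix_inv (A ** B) = matrix_inv B ** matrix_inv A"
proof (rule matrix_inv_unique)
  have "A ** B ** (matrix_inv B ** matrix_inv A) = A ** (B ** matrix_inv B) ** matrix_inv A"
    by (simp add: matrix_mul_assoc)
  then show "A ** B ** (matrix_inv B ** matrix_inv A) = mat 1"
    by (simp add: matrix_inv_right assms)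
qed

lemma matrix_inv_congruence:
  fixes R M :: "real^'n^'n"
  assumes "invertible R" "invertible M"
  shows "matrix_inv (R ** M ** R) = matrix_inv R ** matrix_inv M ** matrix_inv R"
  using assms by (simp add: matrix_inv_mult invertible_mult matrix_mul_assoc)

lemma matrix_inv_sym:
  fixes A :: "real^'n^'n"
  assumes "invertible A" "sym_mat A"
  shows "sym_mat (matrix_inv A)"
proof -
  have "matrix_inv (transpose A) = transpose (matrix_inv A)"
    by (metis assms(1) matrix_inv_left matrix_inv_unique matrix_transpose_mul transpose_mat)
  then show ?thesis using assms(2) by (simp add: sym_mat_def)
qed

lemma inner_transpose: "x \<bullet> (A *v y) = (transpose A *v x) \<bullet> (y::real^'n)"
  by (simp add: dot_lmul_matrix)

lemma sym_inner: "sym_mat A \<Longrightarrow> x \<bullet> (A *v y) = (A *v x) \<bullet> (y::real^'n)"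
  by (metis inner_transpose sym_mat_def)

lemma sym_diff: "sym_mat A \<Longrightarrow> sym_mat B \<Longrightarrow> sym_mat (A - (B::real^'n^'n))"
  unfolding sym_mat_def by (simp add: vec_eq_iff transpose_def)

lemma sym_add: "sym_mat A \<Longrightarrow> sym_mat B \<Longrightarrow> sym_mat (A + (B::real^'n^'n))"
  unfolding sym_mat_def by (simp add: vec_eq_iff transpose_def)

lemma sym_scaleR: "sym_mat A \<Longrightarrow> sym_mat (c *\<^sub>R (A::real^'n^'n))"
  unfolding sym_mat_def by (simp add: transpose_scalar)

lemma pd_sym: "pos_def A \<Longrightarrow> sym_mat A"
  by (simp add: pos_def_def)

lemma pd_quad_nonneg: "pos_def A \<Longrightarrow> 0 \<le> x \<bullet> (A *v x)"
  unfolding pos_def_def by (cases "x = 0") (auto intro: less_imp_le)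

lemma pd_invertible:
  fixes A :: "real^'n^'n"
  assumes "pos_def A"
  shows "invertible A"
proof -
  have "inj ((*v) A)"
  proof (rule injI)
    fix x y assume "A *v x = A *v y"
    then have "(x - y) \<bullet> (A *v (x - y)) = 0" by (simp add: matrix_vector_mult_diff_distrib)
    then show "x = y" using assms unfolding pos_def_def by (metis less_irrefl right_minus_eq)
  qed
  then show ?thesis
    using det_nz_iff_inj[of "(*v) A"] invertible_det_nz[of A]
    by (simp add: matrix_of_matrix_vector_mul)
qed

lemma pd_matrix_inv:
  fixes A :: "real^'n^'n"
  assumes "pos_def A"
  shows "pos_def (matrix_inv A)"
proof -
  have inv: "invertible A" using assms pd_invertible by blast
  have "x \<bullet> (matrix_inv A *v x) > 0" if "x \<noteq> 0" for x
  proof -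
    let ?y = "matrix_inv A *v x"
    have Ay: "A *v ?y = x" using matrix_inv_right[OF inv] by (simp add: matrix_vector_mul_assoc)
    then have "?y \<noteq> 0" using that by auto
    then have "?y \<bullet> (A *v ?y) > 0" using assms unfolding pos_def_def by blast
    then show ?thesis using Ay by (simp add: inner_commute)
  qed
  then show ?thesis
    using matrix_inv_sym[OF inv pd_sym[OF assms]] unfolding pos_def_def by blast
qed

lemma pd_congruence:
  fixes A C :: "real^'n^'n"
  assumes "pos_def A" "invertible C"
  shows "pos_def (transpose C ** A ** C)"
proof -
  have "sym_mat (transpose C ** A ** C)"
    using pd_sym[OF assms(1)] unfolding sym_mat_def
    by (simp add: matrix_transpose_mul matrix_mul_assoc)
  moreover have "x \<bullet> ((transpose C ** A ** C) *v x) > 0" if "x \<noteq> 0" for x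
  proof -
    have "C *v x \<noteq> 0" using that inj_matrix_vector_mult[OF assms(2)]
      by (metis matrix_vector_mult_0_right injD)
    then have "(C *v x) \<bullet> (A *v (C *v x)) > 0" using assms(1) unfolding pos_def_def by blast
    moreover have "(transpose C ** A ** C) *v x = transpose C *v (A *v (C *v x))"
      by (simp only: matrix_vector_mul_assoc matrix_mul_assoc)
    ultimately show ?thesis using inner_transpose[of x "transpose C"] by simp
  qed
  ultimately show ?thesis unfolding pos_def_def by blast
qed

lemma pd_sym_congruence:
  fixes A C :: "real^'n^'n"
  assumes "pos_def A" "pos_def C"
  shows "pos_def (C ** A ** C)"
  using pd_congruence[OF assms(1) pd_invertible[OF assms(2)]] pd_sym[OF assms(2)]
  by (simp add: sym_mat_def)

text \<open>A positive definite matrix has positive determinant: the determinant does not vanish along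
  the segment of positive definite matrices joining the identity to it.\<close>
lemma det_pd_pos:
  fixes A :: "real^'n^'n"
  assumes "pos_def A"
  shows "det A > 0"
proof (rule ccontr)
  assume "\<not> det A > 0"
  define M where "M s = (1 - s) *\<^sub>R mat 1 + s *\<^sub>R A" for s :: real
  have "continuous_on {0..1} (\<lambda>s. det (M s))"
    unfolding M_def det_def by (intro continuous_intros)
  then obtain s where s: "0 \<le> s" "s \<le> 1" "det (M s) = 0"
    using IVT2'[of "\<lambda>s. det (M s)" 1 0 0] \<open>\<not> det A > 0\<close> by (auto simp: M_def)
  have "pos_def (M s)"
    unfolding pos_def_def sym_mat_def
  proof (intro conjI allI impI)
    show "transpose (M s) = M s" using pd_sym[OF assms]
      by (simp add: M_def sym_mat_def transpose_def vec_eq_iff mat_def)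
    fix x :: "real^'n" assume "x \<noteq> 0"
    have "x \<bullet> (M s *v x) = (1 - s) * (x \<bullet> x) + s * (x \<bullet> (A *v x))"
      by (simp add: M_def matrix_vector_mult_add_rdistrib inner_add_right
          scaleR_matrix_vector_assoc[symmetric])
    moreover have "x \<bullet> x > 0" "x \<bullet> (A *v x) > 0"
      using assms \<open>x \<noteq> 0\<close> unfolding pos_def_def by auto
    ultimately show "x \<bullet> (M s *v x) > 0" using s
      by (cases "s = 0") (auto intro: add_nonneg_pos)
  qed
  then show False using s pd_invertible invertible_det_nz by blast
qed

section \<open>Spectral theorem for symmetric matrices\<close>

lemma quadratic_nonneg_linear_zero:
  fixes a b :: real
  assumes "\<And>t. 0 \<le> 2 * t * a + t\<^sup>2 * b"
  shows "a = 0"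
proof -
  define c where "c = \<bar>b\<bar> + 1"
  have c: "c > 0" "b - 2 * c < 0" by (auto simp: c_def)
  have "0 \<le> 2 * (- a / c) * a + (- a / c)\<^sup>2 * b" by (rule assms)
  also have "\<dots> = a\<^sup>2 * (b - 2 * c) / c\<^sup>2"
    using c by (simp add: field_simps power2_eq_square)
  finally have "a\<^sup>2 * (b - 2 * c) \<ge> 0" using c by (simp add: zero_le_divide_iff)
  then have "a\<^sup>2 \<le> 0" using c by (simp add: zero_le_mult_iff)
  then show ?thesis by simp
qed

lemma rayleigh_minimiser_eigenvector:
  fixes A :: "real^'n^'n"
  assumes sym: "sym_mat A" and V: "subspace V" and inv: "\<forall>x\<in>V. A *v x \<in> V"
    and v: "v \<in> V" "v \<bullet> v = 1"
    and min: "\<forall>x\<in>V. (v \<bullet> (A *v v)) * (x \<bullet> x) \<le> x \<bullet> (A *v x)"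
  shows "A *v v = (v \<bullet> (A *v v)) *\<^sub>R v"
proof -
  define l where "l = v \<bullet> (A *v v)"
  have orth: "(A *v v - l *\<^sub>R v) \<bullet> w = 0" if w: "w \<in> V" for w
  proof (rule quadratic_nonneg_linear_zero)
    fix t :: real
    have e1: "(v + t *\<^sub>R w) \<bullet> (A *v (v + t *\<^sub>R w))
        = l + 2 * t * ((A *v v) \<bullet> w) + t\<^sup>2 * (w \<bullet> (A *v w))"
      using sym_inner[OF sym, of v w] inner_commute[of w "A *v v"]
      by (simp add: l_def matrix_vector_right_distrib matrix_vector_mult_scaleR inner_add_left
          inner_add_right algebra_simps power2_eq_square)
    have e2: "(v + t *\<^sub>R w) \<bullet> (v + t *\<^sub>R w) = 1 + 2 * t * (v \<bullet> w) + t\<^sup>2 * (w \<bullet> w)"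
      using v(2) by (simp add: inner_add_left inner_add_right algebra_simps power2_eq_square
          inner_commute)
    have "v + t *\<^sub>R w \<in> V" using V v w by (simp add: subspace_add subspace_scale)
    then have "l * ((v + t *\<^sub>R w) \<bullet> (v + t *\<^sub>R w)) \<le> (v + t *\<^sub>R w) \<bullet> (A *v (v + t *\<^sub>R w))"
      using min by (simp add: l_def)
    then show "0 \<le> 2 * t * ((A *v v - l *\<^sub>R v) \<bullet> w) + t\<^sup>2 * (w \<bullet> (A *v w) - l * (w \<bullet> w))"
      unfolding e1 e2 by (simp add: inner_diff_left algebra_simps)
  qed
  have "A *v v - l *\<^sub>R v \<in> V" using inv v V by (simp add: subspace_diff subspace_scale)
  then have "(A *v v - l *\<^sub>R v) \<bullet> (A *v v - l *\<^sub>R v) = 0" by (rule orth)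
  then show ?thesis by (simp add: l_def)
qed

text \<open>Every nonzero invariant subspace of a symmetric matrix contains a unit eigenvector whose
  eigenvalue bounds the Rayleigh quotient from below; the minimiser exists by compactness
  of the unit sphere.\<close>
lemma rayleigh_eigenvector:
  fixes A :: "real^'n^'n"
  assumes sym: "sym_mat A" and V: "subspace V" and inv: "\<forall>x\<in>V. A *v x \<in> V"
    and ne: "V \<noteq> {0}"
  obtains v l where "v \<in> V" "norm v = 1" "A *v v = l *\<^sub>R v"
    "\<forall>x\<in>V. l * (x \<bullet> x) \<le> x \<bullet> (A *v x)"
proof -
  let ?S = "sphere 0 1 \<inter> V"
  have "compact ?S" using closed_subspace[OF V] by (intro compact_Int_closed) auto
  moreover obtain x0 where "x0 \<in> V" "x0 \<noteq> 0" using ne subspace_0[OF V] by blast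
  then have "(1 / norm x0) *\<^sub>R x0 \<in> ?S" using V by (simp add: subspace_scale)
  then have "?S \<noteq> {}" by blast
  moreover have "continuous_on ?S (\<lambda>x. x \<bullet> (A *v x))"
    by (intro continuous_intros linear_continuous_on) simp
  ultimately obtain v where v: "v \<in> ?S" and vmin: "\<forall>y\<in>?S. v \<bullet> (A *v v) \<le> y \<bullet> (A *v y)"
    using continuous_attains_inf by blast
  define l where "l = v \<bullet> (A *v v)"
  have vv: "v \<bullet> v = 1" using v by (simp add: dot_square_norm)
  have lower: "l * (x \<bullet> x) \<le> x \<bullet> (A *v x)" if "x \<in> V" for x
  proof (cases "x = 0")
    case False
    define u where "u = (1 / norm x) *\<^sub>R x"
    have "u \<in> ?S" using that False V by (simp add: u_def subspace_scale)
    then have "l \<le> u \<bullet> (A *v u)" using vmin l_def by blast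
    also have "u \<bullet> (A *v u) = (x \<bullet> (A *v x)) / (norm x)\<^sup>2"
      by (simp add: u_def matrix_vector_mult_scaleR power2_eq_square)
    finally show ?thesis using False by (simp add: field_simps power2_norm_eq_inner)
  qed simp
  have "A *v v = l *\<^sub>R v"
    using rayleigh_minimiser_eigenvector[OF sym V inv _ vv] v lower by (simp add: l_def)
  then show thesis using that v lower by auto
qed

text \<open>Spectral theorem: an invariant subspace of a symmetric matrix has an orthonormal basis of
  eigenvectors.  Induction on the dimension, splitting off one Rayleigh eigenvector.\<close>
lemma orthonormal_eigenbasis_subspace:
  fixes A :: "real^'n^'n"
  assumes sym: "sym_mat A"
  shows "subspace V \<Longrightarrow> (\<forall>x\<in>V. A *v x \<in> V) \<Longrightarrow>
    \<exists>B. finite B \<and> B \<subseteq> V \<and> (\<forall>b\<in>B. norm b = 1 \<and> (\<exists>l. A *v b = l *\<^sub>R b))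
      \<and> (\<forall>b\<in>B. \<forall>c\<in>B. b \<noteq> c \<longrightarrow> b \<bullet> c = 0)
      \<and> (\<forall>x\<in>V. x = (\<Sum>b\<in>B. (b \<bullet> x) *\<^sub>R b))"
proof (induction "dim V" arbitrary: V rule: less_induct)
  case less
  show ?case
  proof (cases "V = {0}")
    case True
    show ?thesis by (rule exI[of _ "{}"]) (use True in auto)
  next
    case False
    obtain v l where v: "v \<in> V" "norm v = 1" "A *v v = l *\<^sub>R v"
      using rayleigh_eigenvector[OF sym less.prems False] by blast
    have vv: "v \<bullet> v = 1" using v(2) by (simp add: dot_square_norm)
    define V' where "V' = V \<inter> {x. v \<bullet> x = 0}"
    have sV': "subspace V'" unfolding V'_def
      using less.prems(1) subspace_hyperplane subspace_inter by blast
    have iV': "\<forall>x\<in>V'. A *v x \<in> V'"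
    proof
      fix x assume x: "x \<in> V'"
      have "v \<bullet> (A *v x) = (A *v v) \<bullet> x" using sym_inner[OF sym] by blast
      then show "A *v x \<in> V'" using x v(3) less.prems(2) by (simp add: V'_def)
    qed
    have "v \<notin> V'" using vv by (simp add: V'_def)
    moreover have "V' \<subseteq> V" by (simp add: V'_def)
    ultimately have "V' \<subset> V" using v(1) by blast
    then have "dim V' < dim V"
      using subspace_dim_equal[OF sV' less.prems(1)] dim_subset[of V' V] by fastforce
    then obtain B' where B': "finite B'" "B' \<subseteq> V'"
      "\<forall>b\<in>B'. norm b = 1 \<and> (\<exists>l. A *v b = l *\<^sub>R b)"
      "\<forall>b\<in>B'. \<forall>c\<in>B'. b \<noteq> c \<longrightarrow> b \<bullet> c = 0" "\<forall>x\<in>V'. x = (\<Sum>b\<in>B'. (b \<bullet> x) *\<^sub>R b)"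
      using less.hyps[OF _ sV' iV'] by blast
    have vB': "v \<notin> B'" using B'(2) vv by (auto simp: V'_def)
    have orth: "\<forall>b\<in>B'. v \<bullet> b = 0" using B'(2) by (auto simp: V'_def)
    have expand: "x = (\<Sum>b\<in>insert v B'. (b \<bullet> x) *\<^sub>R b)" if x: "x \<in> V" for x
    proof -
      define x' where "x' = x - (v \<bullet> x) *\<^sub>R v"
      have "x' \<in> V'" using x v(1) less.prems(1) vv
        by (simp add: x'_def V'_def subspace_diff subspace_scale inner_diff_right)
      then have "x' = (\<Sum>b\<in>B'. (b \<bullet> x') *\<^sub>R b)" using B'(5) by blast
      also have "\<dots> = (\<Sum>b\<in>B'. (b \<bullet> x) *\<^sub>R b)"
        using orth by (intro sum.cong) (auto simp: x'_def inner_diff_right inner_commute)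
      finally show ?thesis using B'(1) vB' by (simp add: x'_def algebra_simps)
    qed
    show ?thesis
      using B' v vB' orth expand
      by (intro exI[of _ "insert v B'"]) (auto simp: V'_def inner_commute)
  qed
qed

lemma orthonormal_eigenbasis:
  fixes A :: "real^'n^'n"
  assumes "sym_mat A"
  obtains B where "finite B" "\<forall>b\<in>B. norm b = 1 \<and> (\<exists>l. A *v b = l *\<^sub>R b)"
    "\<forall>b\<in>B. \<forall>c\<in>B. b \<noteq> c \<longrightarrow> b \<bullet> c = 0" "\<forall>x. x = (\<Sum>b\<in>B. (b \<bullet> x) *\<^sub>R b)"
  using orthonormal_eigenbasis_subspace[OF assms subspace_UNIV] that by auto

section \<open>The positive definite square root\<close>

lemma matrix_vector_sum: "(A::real^'n^'m) *v (\<Sum>b\<in>B. f b) = (\<Sum>b\<in>B. A *v f b)"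
  by (induct B rule: infinite_finite_induct) (auto simp: matrix_vector_right_distrib)

lemma matrix_eq_on_expansion:
  fixes M M' :: "real^'n^'n"
  assumes expand: "\<forall>x. x = (\<Sum>b\<in>B. (b \<bullet> x) *\<^sub>R b)" and eq: "\<And>b. b \<in> B \<Longrightarrow> M *v b = M' *v b"
  shows "M = M'"
proof -
  have "M *v x = M' *v x" for x
  proof -
    have "M *v x = (\<Sum>b\<in>B. (b \<bullet> x) *\<^sub>R (M *v b))"
      by (subst expand) (simp add: matrix_vector_sum matrix_vector_mult_scaleR)
    also have "\<dots> = (\<Sum>b\<in>B. (b \<bullet> x) *\<^sub>R (M' *v b))" by (simp add: eq)
    also have "\<dots> = M' *v x"
      by (subst (2) expand) (simp add: matrix_vector_sum matrix_vector_mult_scaleR)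
    finally show ?thesis .
  qed
  then show ?thesis by (simp add: matrix_eq)
qed

text \<open>The matrix with prescribed eigenvalues f b on an orthonormal family B.\<close>
definition spectral_matrix :: "(real^'n) set \<Rightarrow> (real^'n \<Rightarrow> real) \<Rightarrow> real^'n^'n" where
  "spectral_matrix B f = (\<chi> i j. \<Sum>b\<in>B. f b * b$i * b$j)"

lemma spectral_matrix_mv:
  "spectral_matrix B f *v x = (\<Sum>b\<in>B. (f b * (b \<bullet> x)) *\<^sub>R b)"
proof -
  have "(spectral_matrix B f *v x) $ i = (\<Sum>b\<in>B. (f b * (b \<bullet> x)) *\<^sub>R b) $ i" for i
  proof -
    have "(spectral_matrix B f *v x) $ i = (\<Sum>j\<in>UNIV. \<Sum>b\<in>B. f b * b$i * b$j * x$j)"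
      by (simp add: spectral_matrix_def matrix_vector_mult_def sum_distrib_right)
    also have "\<dots> = (\<Sum>b\<in>B. \<Sum>j\<in>UNIV. f b * b$i * b$j * x$j)" by (rule sum.swap)
    also have "\<dots> = (\<Sum>b\<in>B. f b * (b \<bullet> x) * b$i)"
      by (simp add: inner_vec_def sum_distrib_left mult_ac)
    finally show ?thesis by simp
  qed
  then show ?thesis by (simp add: vec_eq_iff)
qed

lemma spectral_matrix_eigen:
  assumes "finite B" "\<forall>b\<in>B. norm b = 1" "\<forall>b\<in>B. \<forall>c\<in>B. b \<noteq> c \<longrightarrow> b \<bullet> c = 0" "b \<in> B"
  shows "spectral_matrix B f *v b = f b *\<^sub>R b"
proof -
  have "spectral_matrix B f *v b = (\<Sum>c\<in>B. if c = b then f b *\<^sub>R b else 0)"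
    unfolding spectral_matrix_mv using assms(2-4)
    by (intro sum.cong) (auto simp: dot_square_norm inner_commute)
  also have "\<dots> = f b *\<^sub>R b" using assms(1,4) by simp
  finally show ?thesis .
qed

text \<open>A spectral matrix over a complete orthonormal family with positive eigenvalues is
  positive definite: its quadratic form is sum_b f b (b'x)^2 and some coefficient b'x is nonzero.\<close>
lemma spectral_matrix_pd:
  fixes B :: "(real^'n) set"
  assumes B: "finite B" and expand: "\<forall>x. x = (\<Sum>b\<in>B. (b \<bullet> x) *\<^sub>R b)"
    and f: "\<And>b. b \<in> B \<Longrightarrow> f b > 0"
  shows "pos_def (spectral_matrix B f)"
  unfolding pos_def_def sym_mat_def
proof (intro conjI allI impI)
  show "transpose (spectral_matrix B f) = spectral_matrix B f"
    by (simp add: spectral_matrix_def transpose_def vec_eq_iff mult_ac)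
  fix x :: "real^'n" assume x: "x \<noteq> 0"
  obtain b where b: "b \<in> B" "b \<bullet> x \<noteq> 0"
  proof (rule ccontr)
    assume "\<not> thesis"
    then have "\<forall>b\<in>B. b \<bullet> x = 0" using that by blast
    then have "(\<Sum>b\<in>B. (b \<bullet> x) *\<^sub>R b) = 0" by simp
    then show False using x expand[rule_format, of x] by simp
  qed
  have "0 < (\<Sum>b\<in>B. f b * (b \<bullet> x)\<^sup>2)"
    using f b by (intro sum_pos2[OF B b(1)]) (auto simp: less_imp_le)
  then show "x \<bullet> (spectral_matrix B f *v x) > 0"
    by (simp add: spectral_matrix_mv inner_sum_right power2_eq_square inner_commute mult_ac)
qed

text \<open>A positive definite root of A acts on every eigenvector of A by the square root of
  the eigenvalue: otherwise R would have the negative eigenvalue -sqrt l.\<close>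
lemma pd_root_on_eigenvector:
  fixes R A :: "real^'n^'n"
  assumes R: "pos_def R" "R ** R = A" and b: "A *v b = l *\<^sub>R b" and l: "l \<ge> 0"
  shows "R *v b = sqrt l *\<^sub>R b"
proof (rule ccontr)
  define w where "w = R *v b - sqrt l *\<^sub>R b"
  assume "R *v b \<noteq> sqrt l *\<^sub>R b"
  then have "w \<noteq> 0" by (simp add: w_def)
  then have pos: "w \<bullet> (R *v w) > 0" using R(1) unfolding pos_def_def by blast
  have "R *v w + sqrt l *\<^sub>R w = R *v (R *v b) - (sqrt l * sqrt l) *\<^sub>R b"
    by (simp add: w_def matrix_vector_mult_diff_distrib matrix_vector_mult_scaleR algebra_simps)
  also have "\<dots> = 0" using R(2) b l by (simp add: matrix_vector_mul_assoc)
  finally have "R *v w = - (sqrt l *\<^sub>R w)" by (simp add: eq_neg_iff_add_eq_0)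
  then have "w \<bullet> (R *v w) = - (sqrt l * (w \<bullet> w))" by simp
  moreover have "sqrt l * (w \<bullet> w) \<ge> 0" using l by simp
  ultimately show False using pos by linarith
qed

lemma pd_sqrt_unique:
  fixes A :: "real^'n^'n"
  assumes A: "pos_def A"
  shows "\<exists>!R. pos_def R \<and> R ** R = A"
proof -
  obtain B where B: "finite B" "\<forall>b\<in>B. norm b = 1 \<and> (\<exists>l. A *v b = l *\<^sub>R b)"
      "\<forall>b\<in>B. \<forall>c\<in>B. b \<noteq> c \<longrightarrow> b \<bullet> c = 0" and expand: "\<forall>x. x = (\<Sum>b\<in>B. (b \<bullet> x) *\<^sub>R b)"
    by (rule orthonormal_eigenbasis[OF pd_sym[OF A]])
  have nB: "\<forall>b\<in>B. norm b = 1" using B(2) by blast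
  define lam where "lam b = b \<bullet> (A *v b)" for b
  have eig: "A *v b = lam b *\<^sub>R b" and lpos: "lam b > 0" if "b \<in> B" for b
  proof -
    from bspec[OF B(2) that] obtain l where l: "A *v b = l *\<^sub>R b" by (elim conjE exE)
    have "b \<bullet> b = 1" using nB that by (simp add: dot_square_norm)
    then show "A *v b = lam b *\<^sub>R b" using l by (simp add: lam_def)
    have "b \<noteq> 0" using nB that by auto
    then show "lam b > 0" using A by (simp add: pos_def_def lam_def)
  qed
  define R where "R = spectral_matrix B (\<lambda>b. sqrt (lam b))"
  have Rb: "R *v b = sqrt (lam b) *\<^sub>R b" if "b \<in> B" for b
    unfolding R_def by (rule spectral_matrix_eigen[OF B(1) nB B(3) that])
  have "R ** R = A"
  proof (rule matrix_eq_on_expansion[OF expand])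
    fix b assume "b \<in> B"
    then have "R *v (R *v b) = lam b *\<^sub>R b"
      using lpos[of b] by (simp add: Rb matrix_vector_mult_scaleR)
    then show "(R ** R) *v b = A *v b" using eig[OF \<open>b \<in> B\<close>] by (simp add: matrix_vector_mul_assoc)
  qed
  moreover have "pos_def R"
    unfolding R_def using lpos by (intro spectral_matrix_pd[OF B(1) expand]) simp
  moreover have "R' = R" if "pos_def R'" "R' ** R' = A" for R'
  proof (rule matrix_eq_on_expansion[OF expand])
    fix b assume "b \<in> B"
    then show "R' *v b = R *v b"
      using pd_root_on_eigenvector[OF that eig] lpos[of b] Rb[of b] by simp
  qed
  ultimately show ?thesis by blast
qed

lemma pd_sqrt:
  fixes A :: "real^'n^'n"
  assumes "pos_def A"
  shows "pos_def (pd_sqrt A) \<and> pd_sqrt A ** pd_sqrt A = A"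
  unfolding pd_sqrt_def by (rule theI'[OF pd_sqrt_unique[OF assms]])

section \<open>Matrix powers and their derivatives\<close>

lemma mat_pow_add: "mat_pow A (a + b) = mat_pow A a ** mat_pow A b"
  by (induct a) (simp_all add: matrix_mul_assoc)

lemma mat_pow_Suc_right: "mat_pow A (Suc k) = mat_pow A k ** A"
  using mat_pow_add[of A k 1] by simp

lemma mat_pow_sym: "sym_mat A \<Longrightarrow> sym_mat (mat_pow A k)"
  unfolding sym_mat_def
  by (induct k) (simp_all add: matrix_transpose_mul mat_pow_Suc_right[symmetric])

lemma mat_pow_eigen: "A *v v = l *\<^sub>R v \<Longrightarrow> mat_pow A k *v v = (l ^ k) *\<^sub>R v"
  by (induct k) (simp_all add: matrix_vector_mul_assoc[symmetric] matrix_vector_mult_scaleR)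

lemma matrix_mult_add_rdistrib: "(B + C) ** (A::real^'n^'n) = B ** A + C ** A"
  by (simp add: matrix_matrix_mult_def vec_eq_iff distrib_right sum.distrib)

lemma bounded_bilinear_matrix_mult:
  "bounded_bilinear ((**) :: real^'n^'n \<Rightarrow> real^'n^'n \<Rightarrow> real^'n^'n)"
proof -
  have "bilinear ((**) :: real^'n^'n \<Rightarrow> real^'n^'n \<Rightarrow> real^'n^'n)"
    unfolding bilinear_def
    by (auto intro!: linearI simp: matrix_add_ldistrib matrix_mult_add_rdistrib matrix_scalar_ac
        scalar_matrix_assoc[symmetric])
  then show ?thesis by (simp add: bilinear_conv_bounded_bilinear)
qed

lemma trace_scaleR: "trace (c *\<^sub>R (A::real^'n^'n)) = c * trace A"
  by (simp add: trace_def sum_distrib_left)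

lemma bounded_linear_trace: "bounded_linear (trace :: real^'n^'n \<Rightarrow> real)"
  by (simp add: linear_conv_bounded_linear[symmetric] linearI trace_add trace_scaleR)

lemma bounded_linear_quad_form: "bounded_linear (\<lambda>M::real^'n^'n. z \<bullet> (M *v z))"
  by (simp add: linear_conv_bounded_linear[symmetric] linearI matrix_vector_mult_add_rdistrib
      inner_add_right scaleR_matrix_vector_assoc[symmetric])

text \<open>Product-rule derivative of the k-th power: the derivative of F t ^ k in direction D is
  dpow (F t) D k = sum over the positions where D replaces one factor.\<close>
fun dpow :: "real^'n^'n \<Rightarrow> real^'n^'n \<Rightarrow> nat \<Rightarrow> real^'n^'n" where
  "dpow M D 0 = 0"
| "dpow M D (Suc k) = M ** dpow M D k + D ** mat_pow M k"

lemma mat_pow_has_vector_derivative: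
  assumes "(F has_vector_derivative D) (at x)"
  shows "((\<lambda>t. mat_pow (F t) k) has_vector_derivative dpow (F x) D k) (at x)"
proof (induct k)
  case (Suc k)
  show ?case
    using bounded_bilinear.has_vector_derivative[OF bounded_bilinear_matrix_mult assms Suc]
    by simp
qed simp

text \<open>Under the trace the k summands of dpow coincide (cyclicity of the trace), giving the
  familiar formula d tr(M^k) = k tr(M^(k-1) dM).\<close>
lemma trace_dpow:
  "trace (mat_pow M a ** dpow M D k) = real k * trace (mat_pow M (a + k - 1) ** D)"
proof (induct k arbitrary: a)
  case 0
  then show ?case by (simp add: trace_def)
next
  case (Suc k)
  have "trace (mat_pow M a ** dpow M D (Suc k))
      = trace (mat_pow M (Suc a) ** dpow M D k) + trace ((mat_pow M a ** D) ** mat_pow M k)"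
    using mat_pow_Suc_right[of M a]
    by (simp add: matrix_add_ldistrib trace_add matrix_mul_assoc)
  also have "trace ((mat_pow M a ** D) ** mat_pow M k) = trace (mat_pow M (k + a) ** D)"
    by (simp add: trace_mul_sym[of _ "mat_pow M k"] matrix_mul_assoc mat_pow_add)
  also have "trace (mat_pow M (Suc a) ** dpow M D k) = real k * trace (mat_pow M (a + k) ** D)"
    using Suc[of "Suc a"] by (cases k) simp_all
  finally show ?case by (simp add: algebra_simps add.commute)
qed

definition elem_mat :: "'n \<Rightarrow> 'n \<Rightarrow> real^'n^'n" where
  "elem_mat i j = (\<chi> a b. if a = i \<and> b = j then 1 else 0)"

lemma det_elem_shear:
  "det (mat 1 + t *\<^sub>R elem_mat i j :: real^'n^'n) = (if i = j then 1 + t else 1)"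
proof (cases "i = j")
  case True
  have "det (mat 1 + t *\<^sub>R elem_mat i j :: real^'n^'n)
      = (\<Prod>a\<in>UNIV. (mat 1 + t *\<^sub>R elem_mat i j :: real^'n^'n) $ a $ a)"
    by (rule det_diagonal) (auto simp: elem_mat_def mat_def True)
  also have "\<dots> = (\<Prod>a\<in>UNIV. if a = i then 1 + t else 1)"
    by (intro prod.cong) (auto simp: elem_mat_def mat_def True)
  finally show ?thesis using True by simp
next
  case False
  have "(mat 1 + t *\<^sub>R elem_mat i j :: real^'n^'n) =
      (\<chi> k. if k = i then row i (mat 1) + t *s row j (mat 1) else row k (mat 1))"
    using False by (simp add: vec_eq_iff elem_mat_def mat_def row_def)
  then show ?thesis
    using det_row_operation[OF False, where c=t and A="mat 1 :: real^'n^'n"] False by simp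
qed

lemma transpose_elem_shear:
  "transpose (mat 1 + t *\<^sub>R elem_mat i j) = (mat 1 + t *\<^sub>R transpose (elem_mat i j) :: real^'n^'n)"
  by (simp add: vec_eq_iff transpose_def mat_def elem_mat_def)

lemma trace_mult_elem_mat: "trace (M ** elem_mat i j) = M $ j $ i"
proof -
  have "trace (M ** elem_mat i j) = (\<Sum>a\<in>UNIV. \<Sum>b\<in>UNIV. M$a$b * (if b = i \<and> a = j then 1 else 0))"
    by (simp add: trace_def matrix_matrix_mult_def elem_mat_def conj_commute)
  also have "\<dots> = (\<Sum>a\<in>UNIV. if a = j then M$a$i else 0)"
    by (intro sum.cong) (auto simp: if_distrib cong: if_cong)
  finally show ?thesis by simp
qed

lemma trace_mult_elem_mat_transpose: "trace (M ** transpose (elem_mat i j)) = M $ i $ j"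
proof -
  have "trace (M ** transpose (elem_mat i j))
      = (\<Sum>a\<in>UNIV. \<Sum>b\<in>UNIV. M$a$b * (if b = j \<and> a = i then 1 else 0))"
    by (simp add: trace_def matrix_matrix_mult_def elem_mat_def transpose_def conj_commute)
  also have "\<dots> = (\<Sum>a\<in>UNIV. if a = i then M$a$j else 0)"
    by (intro sum.cong) (auto simp: if_distrib cong: if_cong)
  finally show ?thesis by simp
qed

lemma elem_mat_mv: "elem_mat i j *v y = (\<chi> a. if a = i then y $ j else 0)"
proof -
  have "(elem_mat i j *v y) $ a = (if a = i then y $ j else 0)" for a
    by (cases "a = i") (simp_all add: matrix_vector_mult_def elem_mat_def mult_delta_left)
  then show ?thesis by (simp add: vec_eq_iff)
qed

lemma inner_delta: "z \<bullet> (\<chi> a. if a = i then c else 0) = z $ i * (c::real)"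
  by (simp add: inner_vec_def if_distrib cong: if_cong)

text \<open>Directional derivatives of the two parts of the objective in the symmetric direction
  E W + W E' (E = E_ij), evaluated at a symmetric W.\<close>
lemma quad_form_elem_direction:
  fixes W :: "real^'n^'n"
  assumes "sym_mat W"
  shows "z \<bullet> ((elem_mat i j ** W + W ** transpose (elem_mat i j)) *v z) = 2 * (z $ i * (W *v z) $ j)"
proof -
  define E where "E = elem_mat i j"
  have "z \<bullet> (W *v (transpose E *v z)) = (W *v z) \<bullet> (transpose E *v z)"
    by (rule sym_inner[OF assms])
  also have "\<dots> = (E *v (W *v z)) \<bullet> z"
    using inner_transpose[of "W *v z" "transpose E" z] by simp
  finally have "z \<bullet> (W *v (transpose E *v z)) = z \<bullet> (E *v (W *v z))"
    by (simp add: inner_commute)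
  moreover have "z \<bullet> (E *v (W *v z)) = z $ i * (W *v z) $ j"
    unfolding E_def elem_mat_mv by (rule inner_delta)
  ultimately show ?thesis
    unfolding E_def[symmetric] matrix_vector_mult_add_rdistrib inner_add_right
    by (simp add: matrix_vector_mul_assoc[symmetric])
qed

lemma trace_pow_elem_direction:
  fixes W :: "real^'n^'n"
  assumes "sym_mat W" "q \<ge> 1"
  shows "trace (dpow W (elem_mat i j ** W + W ** transpose (elem_mat i j)) q) = 2 * real q * mat_pow W q $ i $ j"
proof -
  define E where "E = elem_mat i j"
  obtain k where k: "q = Suc k" using assms(2) by (cases q) auto
  have "trace (dpow W (E ** W + W ** transpose E) q)
      = real q * trace (mat_pow W k ** (E ** W + W ** transpose E))"
    using trace_dpow[of W 0 "E ** W + W ** transpose E" q] k by simp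
  also have "trace (mat_pow W k ** (E ** W + W ** transpose E))
      = trace (mat_pow W q ** E) + trace (mat_pow W q ** transpose E)"
  proof -
    have "trace (mat_pow W k ** (E ** W)) = trace (mat_pow W q ** E)"
      using trace_mul_sym[of "mat_pow W k ** E" W] by (simp add: k matrix_mul_assoc)
    moreover have "mat_pow W k ** (W ** transpose E) = mat_pow W q ** transpose E"
      by (simp only: k mat_pow_Suc_right matrix_mul_assoc)
    ultimately show ?thesis by (simp add: matrix_add_ldistrib trace_add)
  qed
  also have "trace (mat_pow W q ** E) = mat_pow W q $ j $ i"
    unfolding E_def by (rule trace_mult_elem_mat)
  also have "trace (mat_pow W q ** transpose E) = mat_pow W q $ i $ j"
    unfolding E_def by (rule trace_mult_elem_mat_transpose)
  also have "mat_pow W q $ j $ i = mat_pow W q $ i $ j"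
    using mat_pow_sym[OF assms(1), of q] unfolding sym_mat_def by (metis transpose_def vec_lambda_beta)
  finally show ?thesis by (simp add: E_def)
qed

section \<open>Stationarity of the whitened objective\<close>

text \<open>The log-posterior in the whitened precision M, up to an additive constant.\<close>
definition whitened_objective ::
  "real \<Rightarrow> nat \<Rightarrow> nat set \<Rightarrow> (nat \<Rightarrow> real^'n) \<Rightarrow> real^'n^'n \<Rightarrow> real" where
  "whitened_objective N q L z M =
     N / 2 * ln (det M) - 1/2 * (\<Sum>l\<in>L. z l \<bullet> (M *v z l)) - 1/2 * trace (mat_pow M q)"

lemma shear_congruence:
  fixes W :: "real^'n^'n" and t :: real and i j :: 'n
  defines "S \<equiv> mat 1 + t *\<^sub>R elem_mat i j"
  assumes W: "pos_def W" and t: "\<bar>t\<bar> < 1"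
  shows "pos_def (S ** W ** transpose S)"
    and "det (S ** W ** transpose S) = det W * (1 + t * (if i = j then 1 else 0))\<^sup>2"
proof -
  have detS: "det S = 1 + t * (if i = j then 1 else 0)"
    unfolding S_def by (simp add: det_elem_shear)
  then have "det S \<noteq> 0" using t by auto
  then have "invertible (transpose S)" by (simp add: invertible_det_nz transpose_invertible)
  from pd_congruence[OF W this] show "pos_def (S ** W ** transpose S)" by simp
  show "det (S ** W ** transpose S) = det W * (1 + t * (if i = j then 1 else 0))\<^sup>2"
    by (simp add: det_mul detS power2_eq_square)
qed

lemma shear_curve_derivative:
  fixes W :: "real^'n^'n"
  shows "((\<lambda>t. (mat 1 + t *\<^sub>R elem_mat i j) ** W ** transpose (mat 1 + t *\<^sub>R elem_mat i j))
      has_vector_derivative elem_mat i j ** W + W ** transpose (elem_mat i j)) (at 0)"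
proof -
  define E where "E = elem_mat i j"
  define S where "S t = mat 1 + t *\<^sub>R E" for t :: real
  have dS: "(S has_vector_derivative E) (at 0)"
    unfolding S_def by (auto intro!: derivative_eq_intros)
  have dSt: "((\<lambda>t. transpose (S t)) has_vector_derivative transpose E) (at 0)"
    unfolding S_def transpose_elem_shear[of _ i j, folded E_def]
    by (auto intro!: derivative_eq_intros)
  have "((\<lambda>t. S t ** W) has_vector_derivative E ** W) (at 0)"
    using bounded_bilinear.has_vector_derivative[OF bounded_bilinear_matrix_mult dS
        has_vector_derivative_const[of W]] by simp
  from bounded_bilinear.has_vector_derivative[OF bounded_bilinear_matrix_mult this dSt]
  show ?thesis by (simp add: S_def E_def add.commute)
qed

text \<open>First-order condition: at a maximiser W of the whitened objective, the derivative along the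
  shear curve t \<mapsto> (I + t E_ij) W (I + t E_ij)' vanishes, which is the (i,j) entry of the
  stationarity equation N I = Z W + q W^q.\<close>
lemma stationarity_entry:
  fixes W :: "real^'n^'n" and z :: "nat \<Rightarrow> real^'n"
  assumes W: "pos_def W" and q: "q \<ge> 1"
    and max: "\<And>M. pos_def M \<Longrightarrow> whitened_objective N q L z M \<le> whitened_objective N q L z W"
  shows "(if i = j then N else 0) = (\<Sum>l\<in>L. z l $ i * (W *v z l) $ j) + real q * mat_pow W q $ i $ j"
proof -
  define E :: "real^'n^'n" where "E = elem_mat i j"
  define \<delta> :: real where "\<delta> = (if i = j then 1 else 0)"
  define S where "S t = mat 1 + t *\<^sub>R E" for t :: real
  define Wt where "Wt t = S t ** W ** transpose (S t)" for t
  define D where "D = E ** W + W ** transpose E"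
  define h where "h t = (\<Sum>l\<in>L. z l \<bullet> (Wt t *v z l))" for t
  define \<tau> where "\<tau> t = trace (mat_pow (Wt t) q)" for t
  define f where "f t = N / 2 * (ln (det W) + 2 * ln (1 + t * \<delta>)) - h t / 2 - \<tau> t / 2" for t
  have Wt0: "Wt 0 = W" by (simp add: Wt_def S_def)
  have "f t \<le> f 0" if "\<bar>0 - t\<bar> < 1" for t
  proof -
    have t: "\<bar>t\<bar> < 1" using that by simp
    have "1 + t * \<delta> > 0" using t by (auto simp: \<delta>_def)
    then have "ln (det (Wt t)) = ln (det W) + 2 * ln (1 + t * \<delta>)"
      using shear_congruence(2)[OF W t] det_pd_pos[OF W]
      by (simp add: Wt_def S_def E_def \<delta>_def ln_mult ln_realpow)
    then have "f t = whitened_objective N q L z (Wt t)"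
      by (simp add: f_def h_def \<tau>_def whitened_objective_def)
    also have "\<dots> \<le> whitened_objective N q L z W"
      using max shear_congruence(1)[OF W t] by (simp add: Wt_def S_def E_def)
    also have "\<dots> = f 0" by (simp add: f_def h_def \<tau>_def whitened_objective_def Wt0)
    finally show ?thesis .
  qed
  moreover have "(f has_real_derivative N * \<delta> - (\<Sum>l\<in>L. z l \<bullet> (D *v z l)) / 2
      - trace (dpow W D q) / 2) (at 0)"
  proof -
    have dWt: "(Wt has_vector_derivative D) (at 0)"
      using shear_curve_derivative[where W=W and i=i and j=j]
      by (simp add: Wt_def[abs_def] S_def E_def D_def)
    have "(h has_real_derivative (\<Sum>l\<in>L. z l \<bullet> (D *v z l))) (at 0)"
      unfolding has_real_derivative_iff_has_vector_derivative h_def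
      by (rule has_vector_derivative_sum,
          rule bounded_linear.has_vector_derivative[OF bounded_linear_quad_form dWt])
    moreover have "(\<tau> has_real_derivative trace (dpow W D q)) (at 0)"
      unfolding has_real_derivative_iff_has_vector_derivative \<tau>_def
      using bounded_linear.has_vector_derivative[OF bounded_linear_trace
          mat_pow_has_vector_derivative[OF dWt, of q]]
      by (simp add: Wt0)
    ultimately show ?thesis
      unfolding f_def by (auto intro!: derivative_eq_intros)
  qed
  ultimately have "N * \<delta> - (\<Sum>l\<in>L. z l \<bullet> (D *v z l)) / 2 - trace (dpow W D q) / 2 = 0"
    by (intro DERIV_local_max[of f _ 0 1]) auto
  then show ?thesis
    using quad_form_elem_direction[OF pd_sym[OF W]] trace_pow_elem_direction[OF pd_sym[OF W] q]
    by (simp add: D_def E_def \<delta>_def sum_distrib_left[symmetric] split: if_splits)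
qed

definition scatter :: "nat set \<Rightarrow> (nat \<Rightarrow> real^'n) \<Rightarrow> real^'n^'n" where
  "scatter L z = (\<Sum>l\<in>L. outer (z l) (z l))"

lemma outer_mv: "outer a b *v y = (b \<bullet> y) *\<^sub>R (a::real^'n)"
  by (simp add: vec_eq_iff outer_def matrix_vector_mult_def inner_vec_def sum_distrib_left mult_ac)

lemma sum_matrix_vector: "(\<Sum>l\<in>L. M l) *v (y::real^'n) = (\<Sum>l\<in>L. M l *v y)"
  by (induct L rule: infinite_finite_induct) (auto simp: matrix_vector_mult_add_rdistrib)

lemma scatter_quad: "y \<bullet> (scatter L z *v y) = (\<Sum>l\<in>L. (z l \<bullet> y)\<^sup>2)"
  by (simp add: scatter_def sum_matrix_vector outer_mv inner_sum_right power2_eq_square inner_commute)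

lemma scatter_quad_nonneg: "0 \<le> y \<bullet> (scatter L z *v y)"
  by (simp add: scatter_quad sum_nonneg)

lemma scatter_mult_entry:
  fixes W :: "real^'n^'n"
  assumes "sym_mat W"
  shows "(scatter L z ** W) $ i $ j = (\<Sum>l\<in>L. z l $ i * (W *v z l) $ j)"
proof -
  have Wsym: "W $ k $ j = W $ j $ k" for k
    using assms unfolding sym_mat_def by (metis transpose_def vec_lambda_beta)
  have "(scatter L z ** W) $ i $ j = (\<Sum>k\<in>UNIV. (\<Sum>l\<in>L. z l $ i * z l $ k) * W $ k $ j)"
    by (simp add: scatter_def matrix_matrix_mult_def outer_def)
  also have "\<dots> = (\<Sum>k\<in>UNIV. \<Sum>l\<in>L. z l $ i * (W $ j $ k * z l $ k))"
    by (simp add: sum_distrib_left sum_distrib_right Wsym mult_ac)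
  also have "\<dots> = (\<Sum>l\<in>L. \<Sum>k\<in>UNIV. z l $ i * (W $ j $ k * z l $ k))"
    by (rule sum.swap)
  also have "\<dots> = (\<Sum>l\<in>L. z l $ i * (W *v z l) $ j)"
    by (simp add: matrix_vector_mult_def sum_distrib_left)
  finally show ?thesis .
qed

lemma stationarity:
  fixes W :: "real^'n^'n" and z :: "nat \<Rightarrow> real^'n"
  assumes W: "pos_def W" and q: "q \<ge> 1"
    and max: "\<And>M. pos_def M \<Longrightarrow> whitened_objective N q L z M \<le> whitened_objective N q L z W"
  shows "N *\<^sub>R mat 1 = scatter L z ** W + real q *\<^sub>R mat_pow W q"
proof -
  have "(N *\<^sub>R mat 1 :: real^'n^'n) $ i $ j = (scatter L z ** W + real q *\<^sub>R mat_pow W q) $ i $ j"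
    for i j
    using stationarity_entry[OF W q max, of i j] scatter_mult_entry[OF pd_sym[OF W], of L z i j]
    by (simp add: mat_def split: if_splits)
  then show ?thesis by (simp add: vec_eq_iff)
qed

section \<open>Eigenvalue bounds from the stationarity equation\<close>

lemma stationary_inverse_equation:
  fixes W Z :: "real^'n^'n"
  assumes inv: "invertible W" and k: "q = Suc k"
    and eq: "N *\<^sub>R mat 1 = Z ** W + real q *\<^sub>R mat_pow W q"
  shows "N *\<^sub>R matrix_inv W = Z + real q *\<^sub>R mat_pow W k"
proof -
  have "N *\<^sub>R matrix_inv W = (Z ** W + real q *\<^sub>R (mat_pow W k ** W)) ** matrix_inv W"
    using eq[symmetric] by (simp add: k mat_pow_Suc_right scalar_matrix_assoc[symmetric] del: mat_pow.simps)
  also have "\<dots> = Z ** (W ** matrix_inv W) + real q *\<^sub>R (mat_pow W k ** (W ** matrix_inv W))"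
    by (simp add: matrix_mult_add_rdistrib matrix_mul_assoc scalar_matrix_assoc)
  finally show ?thesis by (simp add: matrix_inv_right[OF inv])
qed

lemma power_root_lower_bound:
  fixes l N :: real
  assumes l: "l > 0" and N: "N > 0" and k: "q = Suc k" and ineq: "real q * (1 / l) ^ k \<le> N * l"
  shows "(real q / N) powr (1 / real q) \<le> l"
proof -
  have q0: "real q > 0" using k by simp
  have "real q = real q * (1 / l) ^ k * l ^ k" using l by (simp add: power_one_over)
  also have "\<dots> \<le> N * l * l ^ k" using ineq l by (simp add: mult_right_mono)
  also have "\<dots> = N * l ^ q" by (simp add: k)
  finally have "real q / N \<le> l ^ q" using N by (simp add: field_simps)
  then have "(real q / N) powr (1 / real q) \<le> (l ^ q) powr (1 / real q)"
    using N k by (intro powr_mono2) auto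
  also have "\<dots> = l" using l q0 by (simp add: powr_realpow[symmetric] powr_powr)
  finally show ?thesis .
qed

text \<open>Lower bound: the smallest eigenvalue l of W^-1, taken at a Rayleigh eigenvector v,
  satisfies N l = v'Zv + q l^(1-q) >= q l^(1-q).\<close>
lemma stationary_lower_bound:
  fixes W Z :: "real^'n^'n"
  assumes W: "pos_def W" and k: "q = Suc k" and N: "N > 0" and Z: "\<And>x. 0 \<le> x \<bullet> (Z *v x)"
    and eq: "N *\<^sub>R matrix_inv W = Z + real q *\<^sub>R mat_pow W k"
  shows "(real q / N) powr (1 / real q) * (x \<bullet> x) \<le> x \<bullet> (matrix_inv W *v x)"
proof -
  define T where "T = matrix_inv W"
  have T: "pos_def T" unfolding T_def by (rule pd_matrix_inv[OF W])
  have WT: "W ** T = mat 1" unfolding T_def by (rule matrix_inv_right[OF pd_invertible[OF W]])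
  have "(UNIV :: (real^'n) set) \<noteq> {0}"
    using axis_eq_0_iff[of undefined "1::real"] by (metis UNIV_I singletonD zero_neq_one)
  then obtain v l where v: "norm v = 1" "T *v v = l *\<^sub>R v"
      and lmin: "\<forall>y. l * (y \<bullet> y) \<le> y \<bullet> (T *v y)"
    using rayleigh_eigenvector[OF pd_sym[OF T] subspace_UNIV] by (metis UNIV_I)
  have vv: "v \<bullet> v = 1" using v(1) by (simp add: dot_square_norm)
  have "v \<noteq> 0" using v(1) by auto
  then have "0 < v \<bullet> (T *v v)" using T unfolding pos_def_def by blast
  then have l: "l > 0" using v(2) vv by simp
  have "l *\<^sub>R (W *v v) = W *v (T *v v)" using v(2) by (simp add: matrix_vector_mult_scaleR)
  also have "\<dots> = v" using WT by (simp add: matrix_vector_mul_assoc)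
  finally have lWv: "l *\<^sub>R (W *v v) = v" .
  have "W *v v = (1 / l) *\<^sub>R (l *\<^sub>R (W *v v))" using l by simp
  then have "W *v v = (1 / l) *\<^sub>R v" by (simp only: lWv)
  then have Wkv: "mat_pow W k *v v = (1 / l) ^ k *\<^sub>R v" by (rule mat_pow_eigen)
  have "N * l = v \<bullet> ((N *\<^sub>R T) *v v)" using v(2) vv by (simp add: scaleR_matrix_vector_assoc[symmetric])
  also have "\<dots> = v \<bullet> (Z *v v) + real q * (1 / l) ^ k"
    using vv by (simp add: T_def eq matrix_vector_mult_add_rdistrib inner_add_right Wkv
        scaleR_matrix_vector_assoc[symmetric])
  finally have "real q * (1 / l) ^ k \<le> N * l" using Z[of v] by linarith
  from power_root_lower_bound[OF l N k this]
  have "(real q / N) powr (1 / real q) * (x \<bullet> x) \<le> l * (x \<bullet> x)"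
    by (simp add: mult_right_mono)
  also have "\<dots> \<le> x \<bullet> (T *v x)" using lmin by blast
  finally show ?thesis by (simp add: T_def)
qed

lemma inverse_lower_bound_power_norm:
  fixes W T :: "real^'n^'n"
  assumes TW: "T ** W = mat 1" and b: "b > 0" and lower: "\<And>x. b * (x \<bullet> x) \<le> x \<bullet> (T *v x)"
  shows "norm (mat_pow W k *v y) \<le> norm y / b ^ k"
proof (induct k arbitrary: y)
  case (Suc k)
  have step: "b * norm (W *v y) \<le> norm y" for y
  proof (cases "W *v y = 0")
    case False
    define u where "u = W *v y"
    have "T *v u = y" using TW by (simp add: u_def matrix_vector_mul_assoc)
    then have "b * (norm u)\<^sup>2 \<le> norm u * norm y"
      using lower[of u] norm_cauchy_schwarz[of u y] by (simp add: power2_norm_eq_inner)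
    then show ?thesis using False by (simp add: u_def power2_eq_square)
  qed simp
  have "norm (mat_pow W (Suc k) *v y) = norm (W *v (mat_pow W k *v y))"
    by (simp add: matrix_vector_mul_assoc)
  also have "\<dots> \<le> norm (mat_pow W k *v y) / b"
    using step[of "mat_pow W k *v y"] b by (simp add: field_simps)
  also have "\<dots> \<le> (norm y / b ^ k) / b"
    by (rule divide_right_mono[OF Suc]) (use b in simp)
  finally show ?case by (simp add: field_simps)
qed simp

text \<open>Upper bound: q W^(q-1) <= q beta^(1-q) I = N beta I, so N W^-1 <= Z + N beta I.\<close>
lemma stationary_upper_bound:
  fixes W Z :: "real^'n^'n" and N :: real and q :: nat
  defines "\<beta> \<equiv> (real q / N) powr (1 / real q)"
  assumes W: "pos_def W" and k: "q = Suc k" and N: "N > 0"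
    and eq: "N *\<^sub>R matrix_inv W = Z + real q *\<^sub>R mat_pow W k"
    and lower: "\<And>x. \<beta> * (x \<bullet> x) \<le> x \<bullet> (matrix_inv W *v x)"
  shows "x \<bullet> (matrix_inv W *v x) \<le> \<beta> * (x \<bullet> x) + x \<bullet> (Z *v x) / N"
proof -
  have b: "\<beta> > 0" using N k by (simp add: \<beta>_def)
  have "real q > 0" using k by simp
  then have bq: "\<beta> ^ q = real q / N"
    using N by (simp add: \<beta>_def powr_realpow[symmetric] powr_powr)
  have "x \<bullet> (mat_pow W k *v x) \<le> norm x * norm (mat_pow W k *v x)" by (rule norm_cauchy_schwarz)
  also have "\<dots> \<le> norm x * (norm x / \<beta> ^ k)"
    by (rule mult_left_mono[OF inverse_lower_bound_power_norm[OF
          matrix_inv_left[OF pd_invertible[OF W]] b lower] norm_ge_zero])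
  also have "\<dots> = (x \<bullet> x) / \<beta> ^ k" by (simp add: dot_square_norm power2_eq_square)
  finally have "real q * (x \<bullet> (mat_pow W k *v x)) \<le> real q * ((x \<bullet> x) / \<beta> ^ k)"
    by (rule mult_left_mono) simp
  also have "\<dots> = N * \<beta> * (x \<bullet> x)"
  proof -
    have "real q / \<beta> ^ k = N * \<beta>" using bq b N by (simp add: k field_simps)
    then show ?thesis by (metis times_divide_eq_left times_divide_eq_right)
  qed
  finally have "real q * (x \<bullet> (mat_pow W k *v x)) \<le> N * \<beta> * (x \<bullet> x)" .
  moreover have "N * (x \<bullet> (matrix_inv W *v x)) = x \<bullet> (Z *v x) + real q * (x \<bullet> (mat_pow W k *v x))"
  proof -
    have "N * (x \<bullet> (matrix_inv W *v x)) = x \<bullet> ((N *\<^sub>R matrix_inv W) *v x)"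
      by (simp add: scaleR_matrix_vector_assoc[symmetric])
    then show ?thesis
      unfolding eq by (simp add: matrix_vector_mult_add_rdistrib inner_add_right
          scaleR_matrix_vector_assoc[symmetric])
  qed
  ultimately have ineq: "N * (x \<bullet> (matrix_inv W *v x)) \<le> x \<bullet> (Z *v x) + N * \<beta> * (x \<bullet> x)"
    by linarith
  have divide_N: "a \<le> b * c + d / N" if "N * a \<le> d + N * b * c" for a b c d :: real
    using that N by (simp add: field_simps)
  show ?thesis by (rule divide_N[OF ineq])
qed

lemma stationary_bounds:
  fixes W Z :: "real^'n^'n" and N :: real and q :: nat
  defines "\<beta> \<equiv> (real q / N) powr (1 / real q)"
  assumes W: "pos_def W" and q: "q \<ge> 1" and N: "N > 0" and Z: "\<And>x. 0 \<le> x \<bullet> (Z *v x)"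
    and eq: "N *\<^sub>R mat 1 = Z ** W + real q *\<^sub>R mat_pow W q"
  shows "\<beta> * (x \<bullet> x) \<le> x \<bullet> (matrix_inv W *v x)"
    and "x \<bullet> (matrix_inv W *v x) \<le> \<beta> * (x \<bullet> x) + x \<bullet> (Z *v x) / N"
proof -
  obtain k where k: "q = Suc k" using q by (cases q) auto
  note inv_eq = stationary_inverse_equation[OF pd_invertible[OF W] k eq]
  note lower = stationary_lower_bound[OF W k N Z inv_eq, folded \<beta>_def]
  then show "\<beta> * (x \<bullet> x) \<le> x \<bullet> (matrix_inv W *v x)" .
  show "x \<bullet> (matrix_inv W *v x) \<le> \<beta> * (x \<bullet> x) + x \<bullet> (Z *v x) / N"
    using stationary_upper_bound[OF W k N inv_eq lower[unfolded \<beta>_def]] by (simp add: \<beta>_def)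
qed

lemma sum_centered:
  assumes "n \<ge> 1"
  shows "(\<Sum>l\<in>{1..n}. X l - sample_mean n X) = (0::real^'n)"
proof -
  have "(\<Sum>l\<in>{1..n}. X l - sample_mean n X) = (\<Sum>l\<in>{1..n}. X l) - real n *\<^sub>R sample_mean n X"
    by (simp add: sum_subtractf sum_constant_scaleR del: sum_constant)
  also have "real n *\<^sub>R sample_mean n X = (\<Sum>l\<in>{1..n}. X l)"
    using assms by (simp add: sample_mean_def)
  finally show ?thesis by simp
qed

text \<open>For every positive semidefinite weight P, the sample mean minimises the weighted sum of
  squares sum_l (X_l - mu)' P (X_l - mu); the cross term vanishes because the centred data sum
  to zero.\<close>
lemma sample_mean_minimises:
  fixes P :: "real^'n^'n"
  assumes sym: "sym_mat P" and psd: "\<And>x. 0 \<le> x \<bullet> (P *v x)" and n: "n \<ge> 1"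
  shows "(\<Sum>l\<in>{1..n}. (X l - sample_mean n X) \<bullet> (P *v (X l - sample_mean n X)))
       \<le> (\<Sum>l\<in>{1..n}. (X l - mu) \<bullet> (P *v (X l - mu)))"
proof -
  define a where "a l = X l - sample_mean n X" for l
  define d where "d = sample_mean n X - mu"
  have expand: "(a l + d) \<bullet> (P *v (a l + d))
      = a l \<bullet> (P *v a l) + 2 * (a l \<bullet> (P *v d)) + d \<bullet> (P *v d)" for l
    using sym_inner[OF sym, of d "a l"]
    by (simp add: matrix_vector_right_distrib inner_add_left inner_add_right inner_commute)
  have cross: "(\<Sum>l\<in>{1..n}. a l \<bullet> (P *v d)) = 0"
    using sum_centered[OF n, of X] by (simp add: a_def inner_sum_left[symmetric])
  have "X l - mu = a l + d" for l by (simp add: a_def d_def)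
  then have "(\<Sum>l\<in>{1..n}. (X l - mu) \<bullet> (P *v (X l - mu)))
      = (\<Sum>l\<in>{1..n}. a l \<bullet> (P *v a l)) + 2 * (\<Sum>l\<in>{1..n}. a l \<bullet> (P *v d))
        + real n * (d \<bullet> (P *v d))"
    by (simp add: expand sum.distrib sum_distrib_left)
  also have "\<dots> \<ge> (\<Sum>l\<in>{1..n}. a l \<bullet> (P *v a l))" using cross psd[of d] by simp
  finally show ?thesis by (simp add: a_def)
qed

lemma sample_cov_scatter:
  "sample_cov n X = (1 / real n) *\<^sub>R scatter {1..n} (\<lambda>l. X l - sample_mean n X)"
  by (simp add: sample_cov_def scatter_def)

lemma sym_scatter: "sym_mat (scatter L z :: real^'n^'n)"
  unfolding sym_mat_def scatter_def
  by (simp add: vec_eq_iff transpose_def outer_def mult.commute)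

section \<open>The objective in whitened coordinates\<close>

lemma mat_pow_matrix_inv:
  fixes A :: "real^'n^'n"
  assumes "invertible A"
  shows "matrix_inv (mat_pow (matrix_inv A) k) = mat_pow A k"
proof (rule matrix_inv_unique)
  show "mat_pow (matrix_inv A) k ** mat_pow A k = mat 1"
  proof (induct k)
    case (Suc k)
    have "mat_pow (matrix_inv A) (Suc k) ** mat_pow A (Suc k)
        = mat_pow (matrix_inv A) k ** (matrix_inv A ** A) ** mat_pow A k"
      unfolding mat_pow_Suc_right[of "matrix_inv A"] by (simp add: matrix_mul_assoc)
    then show ?case using Suc matrix_inv_left[OF assms] by simp
  qed simp
qed

lemma quad_form_congruence:
  fixes R S :: "real^'n^'n"
  assumes "sym_mat R" "invertible R"
  shows "a \<bullet> (S *v a) = (matrix_inv R *v a) \<bullet> ((R ** S ** R) *v (matrix_inv R *v a))"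
proof -
  have RRi: "R *v (matrix_inv R *v a) = a"
    by (simp add: matrix_vector_mul_assoc matrix_inv_right[OF assms(2)])
  have "(matrix_inv R *v a) \<bullet> ((R ** S ** R) *v (matrix_inv R *v a))
      = (matrix_inv R *v a) \<bullet> (R *v (S *v a))"
    by (simp add: matrix_vector_mul_assoc[symmetric] RRi)
  also have "\<dots> = a \<bullet> (S *v a)" using sym_inner[OF assms(1)] RRi by metis
  finally show ?thesis by simp
qed

lemma log_piw_objective:
  fixes Psi Sg :: "real^'p^'p" and m :: real and q n :: nat
  defines "R \<equiv> pd_sqrt Psi" and "N \<equiv> real n + real CARD('p) + real q * m + 1"
  assumes Psi: "pos_def Psi" and Sg: "pos_def Sg"
  shows "piw_objective Psi m q n X mu Sg > 0"
    and "ln (piw_objective Psi m q n X mu Sg) = - N * ln (det R)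
      + whitened_objective N q {1..n} (\<lambda>l. matrix_inv R *v (X l - mu)) (R ** matrix_inv Sg ** R)"
proof -
  define Ri where "Ri = matrix_inv R"
  define W where "W = R ** matrix_inv Sg ** R"
  have R: "pos_def R" using pd_sqrt[OF Psi] by (simp add: R_def)
  have invR: "invertible R" and invS: "invertible Sg"
    using pd_invertible R Sg by auto
  have W: "pos_def W" unfolding W_def by (rule pd_sym_congruence[OF pd_matrix_inv[OF Sg] R])
  have dS: "det Sg > 0" and dR: "det R > 0" using det_pd_pos R Sg by auto
  have "det Sg * det (matrix_inv Sg) = 1"
    by (simp add: det_mul[symmetric] matrix_inv_right[OF invS])
  then have "det (matrix_inv Sg) = 1 / det Sg" using dS by (simp add: field_simps)
  then have lnW: "ln (det W) = 2 * ln (det R) - ln (det Sg)"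
    using dR dS by (simp add: W_def det_mul ln_mult ln_div)
  have "matrix_inv (mat_pow (Ri ** Sg ** Ri) q) = mat_pow W q"
    using mat_pow_matrix_inv[OF pd_invertible[OF W], of q]
    by (simp add: W_def Ri_def matrix_inv_congruence invR pd_invertible[OF pd_matrix_inv[OF Sg]]
        matrix_inv_inv invS)
  then have obj: "piw_objective Psi m q n X mu Sg = det Sg powr (- real n / 2)
      * exp (- 1/2 * (\<Sum>l\<in>{1..n}. (Ri *v (X l - mu)) \<bullet> (W *v (Ri *v (X l - mu)))))
      * exp (- 1/2 * trace (mat_pow W q)) * det Sg powr (- (real q * m + real CARD('p) + 1) / 2)"
    unfolding piw_objective_def
    using quad_form_congruence[OF pd_sym[OF R] invR, of _ "matrix_inv Sg"]
    by (simp add: R_def Ri_def W_def)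
  then show "piw_objective Psi m q n X mu Sg > 0" using dS by simp
  have "ln (piw_objective Psi m q n X mu Sg) = - N / 2 * ln (det Sg)
      - 1/2 * (\<Sum>l\<in>{1..n}. (Ri *v (X l - mu)) \<bullet> (W *v (Ri *v (X l - mu))))
      - 1/2 * trace (mat_pow W q)"
    unfolding obj using dS by (simp add: ln_mult ln_powr N_def field_simps)
  also have "\<dots> = - N * ln (det R)
      + whitened_objective N q {1..n} (\<lambda>l. Ri *v (X l - mu)) W"
    unfolding whitened_objective_def lnW by (simp add: algebra_simps)
  finally show "ln (piw_objective Psi m q n X mu Sg) = - N * ln (det R)
      + whitened_objective N q {1..n} (\<lambda>l. matrix_inv R *v (X l - mu)) (R ** matrix_inv Sg ** R)"
    by (simp add: Ri_def W_def)
qed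

text \<open>For fixed Sigma the objective is largest at the sample mean, because the sample mean
  minimises every Mahalanobis sum of squares.\<close>
lemma objective_at_sample_mean:
  assumes n: "n \<ge> 1" and Sg: "pos_def Sg"
  shows "piw_objective Psi m q n X mu Sg \<le> piw_objective Psi m q n X (sample_mean n X) Sg"
proof -
  have P: "pos_def (matrix_inv Sg)" by (rule pd_matrix_inv[OF Sg])
  have "(\<Sum>l\<in>{1..n}. (X l - sample_mean n X) \<bullet> (matrix_inv Sg *v (X l - sample_mean n X)))
      \<le> (\<Sum>l\<in>{1..n}. (X l - mu) \<bullet> (matrix_inv Sg *v (X l - mu)))"
    by (rule sample_mean_minimises[OF pd_sym[OF P] pd_quad_nonneg[OF P] n])
  then show ?thesis
    unfolding piw_objective_def by (intro mult_right_mono mult_left_mono) auto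
qed

lemma maximizer_at_sample_mean:
  assumes max: "is_maximizer Psi m q n X mu0 SigmaHat" and n: "n \<ge> 1" and Sg: "pos_def Sg"
  shows "piw_objective Psi m q n X (sample_mean n X) Sg
       \<le> piw_objective Psi m q n X (sample_mean n X) SigmaHat"
proof -
  have "piw_objective Psi m q n X (sample_mean n X) Sg \<le> piw_objective Psi m q n X mu0 SigmaHat"
    using max Sg unfolding is_maximizer_def by blast
  also have "\<dots> \<le> piw_objective Psi m q n X (sample_mean n X) SigmaHat"
    using objective_at_sample_mean[OF n] max unfolding is_maximizer_def by blast
  finally show ?thesis .
qed

text \<open>Hence the whitened precision W = R SigmaHat^-1 R maximises the whitened objective at the
  centred whitened data; every positive definite M arises as R Sigma^-1 R.\<close>
lemma map_whitened_maximiser: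
  fixes Psi SigmaHat :: "real^'p^'p" and m :: real and q n :: nat and X :: "nat \<Rightarrow> real^'p"
  defines "R \<equiv> pd_sqrt Psi" and "N \<equiv> real n + real CARD('p) + real q * m + 1"
  defines "z \<equiv> \<lambda>l. matrix_inv R *v (X l - sample_mean n X)"
  assumes Psi: "pos_def Psi" and n: "n \<ge> 1" and max: "is_maximizer Psi m q n X mu0 SigmaHat"
    and M: "pos_def M"
  shows "whitened_objective N q {1..n} z M
       \<le> whitened_objective N q {1..n} z (R ** matrix_inv SigmaHat ** R)"
proof -
  have R: "pos_def R" using pd_sqrt[OF Psi] by (simp add: R_def)
  have S: "pos_def SigmaHat" using max by (simp add: is_maximizer_def)
  define Ri where "Ri = matrix_inv R"
  have Ri: "pos_def Ri" unfolding Ri_def by (rule pd_matrix_inv[OF R])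
  define Sg where "Sg = matrix_inv (Ri ** M ** Ri)"
  have RiMRi: "pos_def (Ri ** M ** Ri)" by (rule pd_sym_congruence[OF M Ri])
  then have Sg: "pos_def Sg" unfolding Sg_def by (rule pd_matrix_inv)
  have "R ** matrix_inv Sg ** R = R ** Ri ** M ** (Ri ** R)"
    by (simp add: Sg_def matrix_inv_inv[OF pd_invertible[OF RiMRi]] matrix_mul_assoc)
  then have RSR: "R ** matrix_inv Sg ** R = M"
    using pd_invertible[OF R] by (simp add: Ri_def matrix_inv_left matrix_inv_right)
  note log = log_piw_objective(2)[OF Psi, of _ m q n X "sample_mean n X"]
  note pos = log_piw_objective(1)[OF Psi, of _ m q n X "sample_mean n X"]
  have "ln (piw_objective Psi m q n X (sample_mean n X) Sg)
      \<le> ln (piw_objective Psi m q n X (sample_mean n X) SigmaHat)"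
    using maximizer_at_sample_mean[OF max n Sg] pos[OF Sg] by simp
  then show ?thesis
    unfolding log[OF Sg] log[OF S] RSR[unfolded R_def] by (simp add: R_def N_def z_def)
qed

lemma whitened_quad_forms:
  fixes Psi SigmaHat :: "real^'p^'p" and n :: nat and X :: "nat \<Rightarrow> real^'p"
  defines "R \<equiv> pd_sqrt Psi"
  defines "z \<equiv> \<lambda>l. matrix_inv R *v (X l - sample_mean n X)"
  assumes Psi: "pos_def Psi" and S: "pos_def SigmaHat"
  shows "(R *v y) \<bullet> (matrix_inv (R ** matrix_inv SigmaHat ** R) *v (R *v y)) = y \<bullet> (SigmaHat *v y)"
    and "(R *v y) \<bullet> (R *v y) = y \<bullet> (Psi *v y)"
    and "(R *v y) \<bullet> (scatter {1..n} z *v (R *v y)) = real n * (y \<bullet> (sample_cov n X *v y))"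
proof -
  have R: "pos_def R" and RR: "R ** R = Psi" using pd_sqrt[OF Psi] by (auto simp: R_def)
  have invR: "invertible R" by (rule pd_invertible[OF R])
  have RiR: "matrix_inv R *v (R *v v) = v" and RRi: "R *v (matrix_inv R *v v) = v" for v
    by (simp_all add: matrix_vector_mul_assoc matrix_inv_left[OF invR] matrix_inv_right[OF invR])
  have "matrix_inv (R ** matrix_inv SigmaHat ** R) = matrix_inv R ** SigmaHat ** matrix_inv R"
    using S invR by (simp add: matrix_inv_congruence pd_invertible pd_matrix_inv matrix_inv_inv)
  then have "(R *v y) \<bullet> (matrix_inv (R ** matrix_inv SigmaHat ** R) *v (R *v y))
      = (R *v y) \<bullet> (matrix_inv R *v (SigmaHat *v y))"
    by (simp add: matrix_vector_mul_assoc[symmetric] RiR)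
  also have "\<dots> = y \<bullet> (SigmaHat *v y)" using sym_inner[OF pd_sym[OF R]] RRi by metis
  finally show "(R *v y) \<bullet> (matrix_inv (R ** matrix_inv SigmaHat ** R) *v (R *v y))
      = y \<bullet> (SigmaHat *v y)" .
  show "(R *v y) \<bullet> (R *v y) = y \<bullet> (Psi *v y)"
    using sym_inner[OF pd_sym[OF R], of y "R *v y"] by (simp add: matrix_vector_mul_assoc RR)
  have "z l \<bullet> (R *v y) = (X l - sample_mean n X) \<bullet> y" for l
    using sym_inner[OF pd_sym[OF R], of "z l" y] by (simp add: z_def RRi)
  then show "(R *v y) \<bullet> (scatter {1..n} z *v (R *v y)) = real n * (y \<bullet> (sample_cov n X *v y))"
    by (simp add: scatter_quad sample_cov_scatter scaleR_matrix_vector_assoc[symmetric]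
        inner_commute[of "R *v y"])
qed

lemma loewner_le_quad:
  fixes A B :: "real^'n^'n"
  assumes "sym_mat A" "sym_mat B" "\<And>y. y \<bullet> (A *v y) \<le> y \<bullet> (B *v y)"
  shows "loewner_le A B"
  using assms
  by (simp add: loewner_le_def pos_semidef_def sym_diff matrix_vector_mult_diff_rdistrib
      inner_diff_right)

lemma quad_scale: "y \<bullet> ((c *\<^sub>R A) *v y) = c * (y \<bullet> ((A::real^'n^'n) *v y))"
  by (simp add: scaleR_matrix_vector_assoc[symmetric])

lemma quad_add: "y \<bullet> ((A + B) *v y) = y \<bullet> (A *v y) + y \<bullet> ((B::real^'n^'n) *v y)"
  by (simp add: matrix_vector_mult_add_rdistrib inner_add_right)

lemma quad_axis: "axis i 1 \<bullet> (A *v axis i 1) = (A::real^'n^'n) $ i $ i"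
proof -
  have "(A *v axis i 1) $ i = A $ i $ i"
    by (simp add: matrix_vector_mult_def axis_def mult_delta_right)
  then show ?thesis by (simp add: inner_axis')
qed

theorem mainTheorem9:
  fixes Psi SigmaHat :: "real^'p^'p" and m :: real and q n :: nat
    and X :: "nat \<Rightarrow> real^'p"
  assumes "pos_def Psi"
    and "m \<ge> real CARD('p)"
    and "q \<ge> 1"
    and "n \<ge> 1"
    and "is_piw_MAP Psi m q n X SigmaHat"
  defines "N \<equiv> real n + real CARD('p) + real q * m + 1"
  defines "\<beta> \<equiv> (real q / N) powr (1 / real q)"
  defines "\<gamma> \<equiv> real n / N"
  shows "loewner_le (\<beta> *\<^sub>R Psi) SigmaHat
       \<and> loewner_le SigmaHat (\<beta> *\<^sub>R Psi + \<gamma> *\<^sub>R sample_cov n X)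
       \<and> (\<forall>i. \<beta> * Psi $ i $ i \<le> SigmaHat $ i $ i
              \<and> SigmaHat $ i $ i \<le> \<beta> * Psi $ i $ i + \<gamma> * sample_cov n X $ i $ i)"
proof -
  note Psi = assms(1) and q = assms(3) and n = assms(4)
  obtain mu0 where max: "is_maximizer Psi m q n X mu0 SigmaHat"
    using assms(5) unfolding is_piw_MAP_def by blast
  have S: "pos_def SigmaHat" using max by (simp add: is_maximizer_def)
  define R where "R = pd_sqrt Psi"
  define z where "z = (\<lambda>l. matrix_inv R *v (X l - sample_mean n X))"
  define W where "W = R ** matrix_inv SigmaHat ** R"
  have W: "pos_def W"
    using pd_sym_congruence[OF pd_matrix_inv[OF S]] pd_sqrt[OF Psi] by (simp add: W_def R_def)
  have "0 \<le> m" using assms(2) of_nat_0_le_iff order_trans by blast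
  then have "0 \<le> real q * m" by simp
  then have N: "N > 0" by (simp add: N_def)
  have "whitened_objective N q {1..n} z M \<le> whitened_objective N q {1..n} z W" if "pos_def M" for M
    using map_whitened_maximiser[OF Psi n max that] by (simp add: N_def z_def W_def R_def)
  note stationary = stationary_bounds[OF W q N scatter_quad_nonneg stationarity[OF W q this],
      folded \<beta>_def]
  have bounds: "\<beta> * (y \<bullet> (Psi *v y)) \<le> y \<bullet> (SigmaHat *v y)"
    "y \<bullet> (SigmaHat *v y) \<le> \<beta> * (y \<bullet> (Psi *v y)) + \<gamma> * (y \<bullet> (sample_cov n X *v y))" for y
    using stationary[of "R *v y"] whitened_quad_forms(1,2)[OF Psi S, where y=y]
      whitened_quad_forms(3)[OF Psi S, where y=y and n=n and X=X]
    by (simp_all add: W_def z_def R_def \<gamma>_def)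
  have sym: "sym_mat Psi" "sym_mat SigmaHat" "sym_mat (sample_cov n X)"
    using pd_sym[OF Psi] pd_sym[OF S] by (simp_all add: sample_cov_scatter sym_scaleR sym_scatter)
  show ?thesis
    using bounds[of "axis _ 1"] sym
    by (auto intro!: loewner_le_quad bounds sym_add sym_scaleR
        simp: quad_axis quad_scale quad_add)
qed

end
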